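(* Let $n \geq 0$ be an integer, let $X$ and $A_1, \ldots, A_n$ be finite sets with $X$ nonempty (and each $A_i$ nonempty), and for each $1 \leq i \leq n$ let $f_i : X \to A_i$ be a function. Then $$\# \{ (x_0, \ldots, x_n) \in X^{n+1} : f_i(x_{i-1}) = f_i(x_i) \text{ for all } 1 \leq i \leq n \} \geq \frac{(\# X)^{n+1}}{\prod_{i=1}^n \# A_i}.$$
   Context: $\# S$ denotes the cardinality of a finite set $S$; an empty product equals $1$. *)

theory Defs
  imports "HOL-Library.FuncSet" Complex_Main
begin

end

theory Submission
  imports Defs
begin

text \<open>Let \<open>c\<^sub>k(y)\<close> count the admissible tuples \<open>(x\<^sub>0, \<dots>, x\<^sub>k)\<close> with \<open>x\<^sub>k = y\<close>, so that
  \<open>c\<^sub>k\<^sub>+\<^sub>1(y)\<close> is the sum of \<open>c\<^sub>k\<close> over the \<open>f\<^sub>k\<^sub>+\<^sub>1\<close>-fibre of \<open>y\<close>.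
  By AM-GM inside each fibre, and by Jensen's inequality for the fibre sizes (there are at most
  \<open>#A\<^sub>k\<^sub>+\<^sub>1\<close> fibres), the geometric mean of \<open>c\<^sub>k\<^sub>+\<^sub>1\<close> over \<open>X\<close> is at least \<open>#X / #A\<^sub>k\<^sub>+\<^sub>1\<close> times
  that of \<open>c\<^sub>k\<close>. The number of all admissible tuples is \<open>\<Sum>\<^sub>y c\<^sub>n(y)\<close>, which by AM-GM again
  is at least \<open>#X\<close> times the geometric mean of \<open>c\<^sub>n\<close>.\<close>

lemma sum_ln_le_card_mult_ln_mean:
  fixes a :: "'c \<Rightarrow> real"
  assumes "finite S" "S \<noteq> {}" "\<And>j. j \<in> S \<Longrightarrow> a j > 0"
  shows "(\<Sum>j\<in>S. ln (a j)) \<le> real (card S) * ln ((\<Sum>j\<in>S. a j) / real (card S))"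
proof -
  define N where "N = real (card S)"
  define M where "M = (\<Sum>j\<in>S. a j) / N"
  have "N > 0" using assms by (simp add: N_def card_gt_0_iff)
  moreover have "(\<Sum>j\<in>S. a j) > 0" using assms by (intro sum_pos) auto
  ultimately have "M > 0" by (simp add: M_def)
  have "(\<Sum>j\<in>S. ln (a j) - ln M) \<le> (\<Sum>j\<in>S. a j / M - 1)"
  proof (rule sum_mono)
    fix j assume "j \<in> S"
    then have "ln (a j / M) \<le> a j / M - 1" using assms \<open>M > 0\<close> by (intro ln_le_minus_one) auto
    then show "ln (a j) - ln M \<le> a j / M - 1" using assms(3)[OF \<open>j \<in> S\<close>] \<open>M > 0\<close> by (simp add: ln_div)
  qed
  also have "\<dots> = (\<Sum>j\<in>S. a j) / M - N" by (simp add: sum_subtractf sum_divide_distrib N_def)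
  also have "\<dots> = 0" using \<open>N > 0\<close> \<open>(\<Sum>j\<in>S. a j) > 0\<close> by (simp add: M_def)
  finally show ?thesis by (simp add: sum_subtractf N_def M_def)
qed

lemma sum_div_card_fibre:
  fixes h :: "'a \<Rightarrow> 'b" and \<phi> :: "'b \<Rightarrow> real"
  assumes "finite X"
  shows "(\<Sum>y\<in>X. \<phi> (h y) / real (card {z\<in>X. h z = h y})) = (\<Sum>b\<in>h ` X. \<phi> b)"
proof -
  have "(\<Sum>y\<in>X. \<phi> (h y) / real (card {z\<in>X. h z = h y}))
      = (\<Sum>b\<in>h ` X. \<Sum>y\<in>{y\<in>X. h y = b}. \<phi> (h y) / real (card {z\<in>X. h z = h y}))"
    using assms by (intro sum.group[symmetric]) auto
  also have "\<dots> = (\<Sum>b\<in>h ` X. \<Sum>y\<in>{y\<in>X. h y = b}. \<phi> b / real (card {z\<in>X. h z = b}))"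
    by (intro sum.cong) auto
  also have "\<dots> = (\<Sum>b\<in>h ` X. \<phi> b)"
  proof (rule sum.cong[OF refl])
    fix b assume "b \<in> h ` X"
    then have "card {z\<in>X. h z = b} > 0" using assms by (auto simp: card_gt_0_iff)
    then show "(\<Sum>y\<in>{y\<in>X. h y = b}. \<phi> b / real (card {z\<in>X. h z = b})) = \<phi> b" by simp
  qed
  finally show ?thesis .
qed

lemma sum_ln_card_fibre_ge:
  fixes h :: "'a \<Rightarrow> 'b"
  assumes "finite X" "X \<noteq> {}" "finite A" "h ` X \<subseteq> A"
  shows "real (card X) * ln (real (card X) / real (card A))
           \<le> (\<Sum>y\<in>X. ln (real (card {z\<in>X. h z = h y})))"
proof -
  define c where "c y = real (card {z\<in>X. h z = h y})" for y
  have c_pos: "c y > 0" if "y \<in> X" for y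
    using that assms(1) by (auto simp: c_def card_gt_0_iff)
  have "card X > 0" using assms(1,2) by (simp add: card_gt_0_iff)
  moreover have "card (h ` X) > 0" using assms(1,2) by (simp add: card_gt_0_iff)
  moreover have "card (h ` X) \<le> card A" using assms(3,4) by (rule card_mono)
  moreover have "(\<Sum>y\<in>X. 1 / c y) = real (card (h ` X))"
    using sum_div_card_fibre[OF assms(1), of "\<lambda>_. 1" h] by (simp add: c_def)
  ultimately have "real (card X) * ln ((\<Sum>y\<in>X. 1 / c y) / real (card X))
                     \<le> real (card X) * ln (real (card A) / real (card X))"
    by (auto intro!: mult_left_mono divide_right_mono)
  moreover have "(\<Sum>y\<in>X. ln (1 / c y)) \<le> real (card X) * ln ((\<Sum>y\<in>X. 1 / c y) / real (card X))"
    using assms(1,2) c_pos by (intro sum_ln_le_card_mult_ln_mean) auto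
  moreover have "(\<Sum>y\<in>X. ln (1 / c y)) = (\<Sum>y\<in>X. - ln (c y))"
    using c_pos by (intro sum.cong) (auto simp: ln_div)
  moreover have "ln (real (card A) / real (card X)) = - ln (real (card X) / real (card A))"
    using \<open>card X > 0\<close> \<open>card (h ` X) > 0\<close> \<open>card (h ` X) \<le> card A\<close> by (simp add: ln_div)
  ultimately show ?thesis by (simp add: c_def sum_negf)
qed

lemma sum_ln_sum_fibre_ge:
  fixes h :: "'a \<Rightarrow> 'b" and u :: "'a \<Rightarrow> real"
  assumes "finite X" "X \<noteq> {}" "finite A" "h ` X \<subseteq> A" "\<And>y. y \<in> X \<Longrightarrow> u y > 0"
  shows "(\<Sum>y\<in>X. ln (u y)) + real (card X) * ln (real (card X) / real (card A))
           \<le> (\<Sum>y\<in>X. ln (\<Sum>z\<in>{z\<in>X. h z = h y}. u z))"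
proof -
  define c where "c y = real (card {z\<in>X. h z = h y})" for y
  define v where "v y = (\<Sum>z\<in>{z\<in>X. h z = h y}. u z)" for y
  have fibre_AM_GM: "ln (c y) + (\<Sum>z\<in>{z\<in>X. h z = h y}. ln (u z)) / c y \<le> ln (v y)"
    if "y \<in> X" for y
  proof -
    have "c y > 0" using that assms(1) by (auto simp: c_def card_gt_0_iff)
    moreover have "v y > 0" using that assms(1,5) unfolding v_def by (intro sum_pos) auto
    moreover have "(\<Sum>z\<in>{z\<in>X. h z = h y}. ln (u z)) \<le> c y * ln (v y / c y)"
      unfolding c_def v_def using that assms(1,5) by (intro sum_ln_le_card_mult_ln_mean) auto
    ultimately show ?thesis by (simp add: ln_div field_simps)
  qed
  have "(\<Sum>y\<in>X. (\<Sum>z\<in>{z\<in>X. h z = h y}. ln (u z)) / c y) = (\<Sum>y\<in>X. ln (u y))"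
    using sum_div_card_fibre[OF assms(1), of "\<lambda>b. \<Sum>z\<in>{z\<in>X. h z = b}. ln (u z)" h]
    by (simp add: c_def sum.group assms(1))
  then have "(\<Sum>y\<in>X. ln (c y)) + (\<Sum>y\<in>X. ln (u y)) \<le> (\<Sum>y\<in>X. ln (v y))"
    using sum_mono[of X _ "\<lambda>y. ln (v y)", OF fibre_AM_GM] by (simp add: sum.distrib)
  with sum_ln_card_fibre_ge[OF assms(1-4)] show ?thesis by (simp add: c_def v_def)
qed

definition linked_tuples :: "(nat \<Rightarrow> 'a \<Rightarrow> 'b) \<Rightarrow> 'a set \<Rightarrow> nat \<Rightarrow> (nat \<Rightarrow> 'a) set" where
  "linked_tuples f X n = {x \<in> PiE {0..n} (\<lambda>_. X). \<forall>i\<in>{1..n}. f i (x (i - 1)) = f i (x i)}"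

lemma finite_linked_tuples: "finite X \<Longrightarrow> finite {x \<in> linked_tuples f X n. P x}"
  unfolding linked_tuples_def
  by (rule finite_subset[where B = "PiE {0..n} (\<lambda>_. X)"]) (auto intro: finite_PiE)

lemma card_linked_tuples_ending_pos:
  assumes "finite X" "y \<in> X"
  shows "card {x \<in> linked_tuples f X n. x n = y} > 0"
proof -
  have "restrict (\<lambda>_. y) {0..n} \<in> {x \<in> linked_tuples f X n. x n = y}"
    using assms(2) by (auto simp: linked_tuples_def)
  then show ?thesis using finite_linked_tuples[OF assms(1)] by (auto simp: card_gt_0_iff)
qed

lemma card_linked_tuples_Suc_ending:
  assumes "finite X" "y \<in> X"
  shows "card {x \<in> linked_tuples f X (Suc n). x (Suc n) = y}
           = (\<Sum>z\<in>{z\<in>X. f (Suc n) z = f (Suc n) y}. card {x \<in> linked_tuples f X n. x n = z})"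
proof -
  define S where "S = {x \<in> linked_tuples f X (Suc n). x (Suc n) = y}"
  define T where "T = (SIGMA z:{z\<in>X. f (Suc n) z = f (Suc n) y}. {x \<in> linked_tuples f X n. x n = z})"
  have "bij_betw (\<lambda>x. (x n, restrict x {0..n})) S T"
  proof (rule bij_betw_byWitness[where f' = "\<lambda>(z, w). w(Suc n := y)"])
    show "\<forall>x\<in>S. (\<lambda>(z, w). w(Suc n := y)) (x n, restrict x {0..n}) = x"
      by (auto simp: S_def linked_tuples_def PiE_iff extensional_def fun_eq_iff le_Suc_eq)
    show "\<forall>p\<in>T. (\<lambda>x. (x n, restrict x {0..n})) ((\<lambda>(z, w). w(Suc n := y)) p) = p"
      by (auto simp: T_def linked_tuples_def PiE_iff extensional_def fun_eq_iff)
    show "(\<lambda>x. (x n, restrict x {0..n})) ` S \<subseteq> T"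
    proof clarify
      fix x assume "x \<in> S"
      then have "f (Suc n) (x n) = f (Suc n) (x (Suc n))"
        by (auto simp: S_def linked_tuples_def dest: bspec[of _ _ "Suc n"])
      with \<open>x \<in> S\<close> show "(x n, restrict x {0..n}) \<in> T"
        by (auto simp: S_def T_def linked_tuples_def PiE_iff extensional_def)
    qed
    show "(\<lambda>(z, w). w(Suc n := y)) ` T \<subseteq> S"
      using assms(2) by (auto simp: S_def T_def linked_tuples_def PiE_iff extensional_def le_Suc_eq)
  qed
  then have "card S = card T" by (rule bij_betw_same_card)
  also have "card T = (\<Sum>z\<in>{z\<in>X. f (Suc n) z = f (Suc n) y}. card {x \<in> linked_tuples f X n. x n = z})"
    unfolding T_def using finite_linked_tuples[OF assms(1)] assms(1) by (intro card_SigmaI) auto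
  finally show ?thesis by (simp add: S_def)
qed

lemma card_linked_tuples_eq_sum_ending:
  assumes "finite X"
  shows "card (linked_tuples f X n) = (\<Sum>y\<in>X. card {x \<in> linked_tuples f X n. x n = y})"
  using finite_linked_tuples[OF assms, of f n "\<lambda>_. True"] assms
  by (subst card_eq_sum, subst sum.group[symmetric]) (auto simp: linked_tuples_def PiE_iff)

lemma sum_ln_card_linked_tuples_ending_ge:
  assumes "finite X" "X \<noteq> {}"
    and "\<And>i. i \<in> {1..n} \<Longrightarrow> finite (A i)" "\<And>i. i \<in> {1..n} \<Longrightarrow> f i ` X \<subseteq> A i"
  shows "real (card X) * (\<Sum>i=1..n. ln (real (card X) / real (card (A i))))
           \<le> (\<Sum>y\<in>X. ln (real (card {x \<in> linked_tuples f X n. x n = y})))"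
  using assms(3,4)
proof (induction n)
  case 0
  have "1 \<le> real (card {x \<in> linked_tuples f X 0. x 0 = y})" if "y \<in> X" for y
    using card_linked_tuples_ending_pos[OF assms(1) that, of f 0] by simp
  then show ?case by (auto intro!: sum_nonneg)
next
  case (Suc n)
  have "real (card X) * (\<Sum>i=1..n. ln (real (card X) / real (card (A i))))
          + real (card X) * ln (real (card X) / real (card (A (Suc n))))
        \<le> (\<Sum>y\<in>X. ln (real (card {x \<in> linked_tuples f X n. x n = y})))
          + real (card X) * ln (real (card X) / real (card (A (Suc n))))"
    using Suc by simp
  also have "\<dots> \<le> (\<Sum>y\<in>X. ln (\<Sum>z\<in>{z\<in>X. f (Suc n) z = f (Suc n) y}.
                                    real (card {x \<in> linked_tuples f X n. x n = z})))"
    using assms(1,2) Suc.prems(1,2)[of "Suc n"] card_linked_tuples_ending_pos[OF assms(1), of _ f n]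
    by (intro sum_ln_sum_fibre_ge) auto
  also have "\<dots> = (\<Sum>y\<in>X. ln (real (card {x \<in> linked_tuples f X (Suc n). x (Suc n) = y})))"
    using assms(1) by (intro sum.cong) (simp_all add: card_linked_tuples_Suc_ending)
  finally show ?case by (simp add: algebra_simps)
qed

lemma card_linked_tuples_ge:
  assumes "finite X" "X \<noteq> {}"
    and "\<And>i. i \<in> {1..n} \<Longrightarrow> finite (A i)" "\<And>i. i \<in> {1..n} \<Longrightarrow> f i ` X \<subseteq> A i"
  shows "real (card X) * (\<Prod>i=1..n. real (card X) / real (card (A i)))
           \<le> real (card (linked_tuples f X n))"
proof -
  define N where "N = real (card X)"
  define c where "c y = real (card {x \<in> linked_tuples f X n. x n = y})" for y
  define P where "P = (\<Prod>i=1..n. N / real (card (A i)))"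
  have "N > 0" using assms(1,2) by (simp add: N_def card_gt_0_iff)
  have A_pos: "real (card (A i)) > 0" if "i \<in> {1..n}" for i
    using assms(1-4) that by (fastforce simp: card_gt_0_iff)
  have c_pos: "c y > 0" if "y \<in> X" for y
    using card_linked_tuples_ending_pos[OF assms(1) that] by (simp add: c_def)
  have card_eq: "real (card (linked_tuples f X n)) = (\<Sum>y\<in>X. c y)"
    by (simp add: c_def card_linked_tuples_eq_sum_ending[OF assms(1)])
  have "ln P = (\<Sum>i=1..n. ln (N / real (card (A i))))"
    unfolding P_def using \<open>N > 0\<close> A_pos by (intro ln_prod) (auto simp: less_imp_neq[symmetric])
  then have "N * ln P \<le> (\<Sum>y\<in>X. ln (c y))"
    using sum_ln_card_linked_tuples_ending_ge[of X n A f] assms by (simp add: N_def c_def)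
  also have "\<dots> \<le> N * ln ((\<Sum>y\<in>X. c y) / N)"
    using sum_ln_le_card_mult_ln_mean[OF assms(1,2) c_pos] by (simp add: N_def)
  finally have "ln P \<le> ln ((\<Sum>y\<in>X. c y) / N)" using \<open>N > 0\<close> by simp
  moreover have "P > 0" unfolding P_def using \<open>N > 0\<close> A_pos by (intro prod_pos) simp
  moreover have "(\<Sum>y\<in>X. c y) > 0" using assms(1,2) c_pos by (intro sum_pos) auto
  ultimately have "P \<le> (\<Sum>y\<in>X. c y) / N" using \<open>N > 0\<close> by simp
  then show ?thesis using \<open>N > 0\<close> by (simp add: card_eq P_def N_def field_simps)
qed

theorem lemma2p1:
  fixes n :: nat and X :: "'a set" and A :: "nat \<Rightarrow> 'b set"
    and f :: "nat \<Rightarrow> 'a \<Rightarrow> 'b"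
  assumes "finite X" and "X \<noteq> {}"
    and "\<And>i. i \<in> {1..n} \<Longrightarrow> finite (A i) \<and> A i \<noteq> {}"
    and "\<And>i. i \<in> {1..n} \<Longrightarrow> f i \<in> X \<rightarrow> A i"
  shows "real (card {x \<in> PiE {0..n} (\<lambda>_. X). \<forall>i\<in>{1..n}. f i (x (i - 1)) = f i (x i)})
           \<ge> real (card X) ^ (n + 1) / (\<Prod>i=1..n. real (card (A i)))"
proof -
  have "real (card X) ^ (n + 1) / (\<Prod>i=1..n. real (card (A i)))
          = real (card X) * (\<Prod>i=1..n. real (card X) / real (card (A i)))"
    by (simp add: prod_dividef)
  also have "\<dots> \<le> real (card (linked_tuples f X n))"
    using assms by (intro card_linked_tuples_ge) (auto simp: funcset_image)
  finally show ?thesis by (simp add: linked_tuples_def)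
qed

end
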